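(* Consider the three-species system $$\begin{cases}\partial_tx_1+\partial_ax_1=-\big(\mu_1(a)+\int_0^Ag_1x_2\,da+u(t)\big)x_1,\\ \partial_tx_2+\partial_ax_2=-\big(\mu_2(a)+\int_0^Ag_2x_3\,da\big)x_2,\\ \partial_tx_3+\partial_ax_3=-\big(\mu_3(a)+\int_0^Ag_3x_1\,da\big)x_3,\\ x_i(0,t)=\int_0^Ak_i(a)x_i(a,t)da,\quad x_i(a,0)=x_{i,0}(a),\ i=1,2,3,\end{cases}$$ on $(0,A)\times\mathbb R_+$, with a positive steady state $x^*_i$ as described below, and a positive solution. Define $\Pi_i(x_i(t))=\langle\pi_{0,i},x_i(t)\rangle_{L^2(0,A)}/\langle\pi_{0,i},x_i^*\rangle_{L^2(0,A)}$, $\eta_i(t)=\ln\Pi_i(x_i(t))$ and $\psi_i(t-a)=\frac{x_i(a,t)}{x_i^*(a)\Pi_i(x_i(t))}-1$. Then $$\begin{aligned}\dot\eta_1&=\zeta_1-u(t)-e^{\eta_2}\int_0^Ag_1(a)x_2^*(a)(1+\psi_2(t-a))da,\\ \dot\eta_2&=\zeta_2-e^{\eta_3}\int_0^Ag_2(a)x_3^*(a)(1+\psi_3(t-a))da,\\ \dot\eta_3&=\zeta_3-e^{\eta_1}\int_0^Ag_3(a)x_1^*(a)(1+\psi_1(t-a))da,\end{aligned}$$ $\psi_i(t)=\int_0^A\tilde k_i(a)\psi_i(t-a)da$, with $\eta_i(0)=\ln\Pi_i(x_{i,0})$, $\psi_i(-a)=\frac{x_{i,0}(a)}{x_i^*(a)\Pi_i(x_{i,0})}-1$,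 and the solution is given by $x_i(a,t)=x_i^*(a)(1+\psi_i(t-a))e^{\eta_i(t)}$.
   Context: Kernels $g_i\in L^2(0,A)$, $g_i\ge0$; mortalities $\mu_i\ge0$, locally integrable, $\int_0^A\mu_i=\infty$; fertilities $k_i\in L^\infty$, $k_i\ge0$. For a constant control $u^*$, the steady state is $x_i^*(a)=x_i^*(0)e^{-\int_0^a(\mu_i(s)+\zeta_i)ds}$, where $\zeta_i$ is the unique real number with $\int_0^A\tilde k_i(a)da=1$, $\tilde k_i(a)=k_i(a)e^{-\int_0^a(\mu_i(s)+\zeta_i)ds}$, and $\zeta_1=\int_0^Ag_1x_2^*+u^*$, $\zeta_2=\int_0^Ag_2x_3^*$, $\zeta_3=\int_0^Ag_3x_1^*$. The adjoint functions are $\pi_{0,i}(a)=\int_a^Ak_i(s)e^{-\int_a^s(\zeta_i+\mu_i(l))dl}ds$. *)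

theory Defs
  imports "HOL-Analysis.Analysis"
begin

definition L2on :: "real \<Rightarrow> (real \<Rightarrow> real) \<Rightarrow> bool" where
  "L2on A f \<longleftrightarrow> set_borel_measurable lborel {0..A} f
      \<and> set_integrable lborel {0..A} (\<lambda>a. (f a)\<^sup>2)"

definition Linfon :: "real \<Rightarrow> (real \<Rightarrow> real) \<Rightarrow> bool" where
  "Linfon A f \<longleftrightarrow> set_borel_measurable lborel {0..A} f
      \<and> (\<exists>C. AE a in lborel. a \<in> {0..A} \<longrightarrow> \<bar>f a\<bar> \<le> C)"

definition locint :: "real \<Rightarrow> (real \<Rightarrow> real) \<Rightarrow> bool" where
  "locint A f \<longleftrightarrow> (\<forall>b. 0 \<le> b \<and> b < A \<longrightarrow> set_integrable lborel {0..b} f)"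

definition ktilde :: "(real \<Rightarrow> real) \<Rightarrow> real \<Rightarrow> (real \<Rightarrow> real) \<Rightarrow> real \<Rightarrow> real" where
  "ktilde mu z k a = k a * exp (- (LINT s:{0..a}|lborel. mu s + z))"

definition pi0 :: "real \<Rightarrow> (real \<Rightarrow> real) \<Rightarrow> real \<Rightarrow> (real \<Rightarrow> real) \<Rightarrow> real \<Rightarrow> real" where
  "pi0 A mu z k a = (LINT s:{a..A}|lborel. k s * exp (- (LINT l:{a..s}|lborel. z + mu l)))"

definition PiF :: "real \<Rightarrow> (real \<Rightarrow> real) \<Rightarrow> real \<Rightarrow> (real \<Rightarrow> real) \<Rightarrow> (real \<Rightarrow> real)
    \<Rightarrow> (real \<Rightarrow> real) \<Rightarrow> real" where
  "PiF A mu z k xs f = (LINT a:{0..A}|lborel. pi0 A mu z k a * f a)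
                      / (LINT a:{0..A}|lborel. pi0 A mu z k a * xs a)"

definition eta :: "real \<Rightarrow> (real \<Rightarrow> real) \<Rightarrow> real \<Rightarrow> (real \<Rightarrow> real) \<Rightarrow> (real \<Rightarrow> real)
    \<Rightarrow> (real \<Rightarrow> real \<Rightarrow> real) \<Rightarrow> real \<Rightarrow> real" where
  "eta A mu z k xs x t = ln (PiF A mu z k xs (\<lambda>a. x a t))"

definition steady_profile :: "real \<Rightarrow> (real \<Rightarrow> real) \<Rightarrow> real \<Rightarrow> (real \<Rightarrow> real) \<Rightarrow> bool" where
  "steady_profile A mu z xs \<longleftrightarrow> xs 0 > 0 \<and>
     (\<forall>a. 0 \<le> a \<and> a < A \<longrightarrow> xs a = xs 0 * exp (- (LINT s:{0..a}|lborel. mu s + z)))"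

text \<open>Solution (in C([0,oo); L2(0,A)), along characteristics) of
  d_t x + d_a x = -(mu(a) + W(t)) x,  x(0,t) = int_0^A k x(.,t),  x(a,0) = x0(a).
  x a t is the density at age a and time t.\<close>
definition char_solution :: "real \<Rightarrow> (real \<Rightarrow> real) \<Rightarrow> (real \<Rightarrow> real) \<Rightarrow> (real \<Rightarrow> real)
    \<Rightarrow> (real \<Rightarrow> real \<Rightarrow> real) \<Rightarrow> (real \<Rightarrow> real) \<Rightarrow> bool" where
  "char_solution A mu k W x x0 \<longleftrightarrow>
     (\<forall>t\<ge>0. L2on A (\<lambda>a. x a t)) \<and>
     (\<forall>t\<ge>0. ((\<lambda>s. LINT a:{0..A}|lborel. (x a s - x a t)\<^sup>2) \<longlongrightarrow> 0) (at t within {0..})) \<and>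
     (\<forall>a t s. 0 \<le> a \<and> a < A \<and> 0 \<le> t \<and> 0 \<le> s \<and> a + s < A \<longrightarrow>
        x (a + s) (t + s) = x a t * exp (- ((LINT r:{a..a+s}|lborel. mu r)
                                           + (LINT r:{0..s}|lborel. W (t + r))))) \<and>
     (\<forall>t\<ge>0. x 0 t = (LINT a:{0..A}|lborel. k a * x a t)) \<and>
     (\<forall>a. 0 < a \<and> a < A \<longrightarrow> x a 0 = x0 a)"

end

theory Submission
  imports Defs
begin

(* Divided by the steady profile xs(a) and by the growth factor exp(zeta t - int_0^t W), the
   density is constant along characteristics, hence a function cohort(t - a) of the birth time
   alone, and the boundary condition becomes the renewal equation
   cohort(t) = int ktilde(a) cohort(t - a) da.  Since pi_0(a) xs(a) = xs(0) tail(a) with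
   tail(a) = int_a^A ktilde, the pairing <pi_0, x(t)> is xs(0) exp(zeta t - int_0^t W) times the
   weighted mass L(t) = int_0^A tail(a) cohort(t - a) da.  Fubini and the renewal equation give
   L(T) + C(tau, T) = L(tau) + C(tau, T) for the cohort mass C(tau, T) = int_tau^T cohort, which
   is finite when T - tau < A; so L is constant.  Therefore
   Pi(x(t)) = exp(zeta t - int_0^t W) Pi(x_0), eta' = zeta - W, and psi = cohort / Pi(x_0) - 1. *)

lemma borel_measurable_eq_except_finite:
  fixes f g :: "real \<Rightarrow> real"
  assumes "finite S" "\<And>x. x \<notin> S \<Longrightarrow> f x = g x" "f \<in> borel_measurable lborel"
  shows "g \<in> borel_measurable lborel"
proof -
  have "g = (\<lambda>x. f x + (\<Sum>s\<in>S. indicator {s} x * (g s - f s)))"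
  proof
    fix x
    show "g x = f x + (\<Sum>s\<in>S. indicator {s} x * (g s - f s))"
    proof (cases "x \<in> S")
      case True
      have "(\<Sum>s\<in>S. indicator {s} x * (g s - f s)) = (\<Sum>s\<in>{x}. indicator {s} x * (g s - f s))"
        using True assms(1) by (intro sum.mono_neutral_right) (auto simp: indicator_def)
      then show ?thesis by simp
    next
      case False
      then have "(\<Sum>s\<in>S. indicator {s} x * (g s - f s)) = 0"
        by (intro sum.neutral) (auto simp: indicator_def)
      then show ?thesis using assms(2)[OF False] by simp
    qed
  qed
  also have "\<dots> \<in> borel_measurable lborel" using assms(3) by measurable
  finally show ?thesis .
qed

lemma AE_lborel_notin_finite: "finite (S::real set) \<Longrightarrow> AE x in lborel. x \<notin> S"
  by (intro AE_I'[where N=S]) (auto intro: finite_imp_null_set_lborel)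

lemma integral_eq_except_finite:
  fixes f g :: "real \<Rightarrow> real"
  assumes "finite S" "\<And>x. x \<notin> S \<Longrightarrow> f x = g x"
  shows "integral\<^sup>L lborel f = integral\<^sup>L lborel g"
proof (cases "f \<in> borel_measurable lborel")
  case True
  then have "g \<in> borel_measurable lborel" using borel_measurable_eq_except_finite assms by blast
  then show ?thesis
    using AE_lborel_notin_finite[OF assms(1)] assms(2) True by (intro integral_cong_AE) auto
next
  case False
  then have "g \<notin> borel_measurable lborel"
    using borel_measurable_eq_except_finite[of S g f] assms by metis
  then show ?thesis using False by (metis borel_measurable_integrable not_integrable_integral_eq)
qed

lemma integrable_eq_except_finite:
  fixes f g :: "real \<Rightarrow> real"
  assumes "finite S" "\<And>x. x \<notin> S \<Longrightarrow> f x = g x" "integrable lborel f"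
  shows "integrable lborel g"
proof -
  have "g \<in> borel_measurable lborel"
    using borel_measurable_eq_except_finite[OF assms(1,2)] assms(3) by auto
  then show ?thesis
    using AE_lborel_notin_finite[OF assms(1)] assms(2,3)
    by (intro integrable_cong_AE_imp[OF assms(3)]) auto
qed

lemma set_integral_Icc_split:
  fixes f :: "real \<Rightarrow> real"
  assumes f: "set_integrable lborel {a..c} f" and "a \<le> b" "b \<le> c"
  shows "(LINT s:{a..c}|lborel. f s) = (LINT s:{a..b}|lborel. f s) + (LINT s:{b..c}|lborel. f s)"
proof -
  have "set_integrable lborel {a..b} f" "set_integrable lborel {b..c} f"
    using assms by (auto intro: set_integrable_subset[OF f])
  then have "(LINT s:{a..b}|lborel. f s) + (LINT s:{b..c}|lborel. f s)
      = (LINT s|lborel. indicator {a..b} s * f s + indicator {b..c} s * f s)"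
    unfolding set_lebesgue_integral_def set_integrable_def by simp
  also have "\<dots> = (LINT s|lborel. indicator {a..c} s * f s)"
    by (rule integral_eq_except_finite[of "{b}"]) (use assms in \<open>auto simp: indicator_def\<close>)
  finally show ?thesis unfolding set_lebesgue_integral_def by simp
qed

lemma set_integrable_Icc_const: "set_integrable lborel {a..b::real} (\<lambda>s. c::real)"
  unfolding set_integrable_def by (intro borel_integrable_compact) auto

lemma set_integral_Icc_add_const:
  fixes f :: "real \<Rightarrow> real"
  assumes "set_integrable lborel {a..b} f" "a \<le> b"
  shows "(LINT s:{a..b}|lborel. f s + c) = (LINT s:{a..b}|lborel. f s) + c * (b - a)"
  using set_integral_add(2)[OF assms(1) set_integrable_Icc_const[of a b c]] assms(2)
  by (simp add: set_integral_const)

lemma integrable_indicator_Icc_const: "integrable lborel (\<lambda>s. indicator {a..b::real} s * (c::real))"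
  using set_integrable_Icc_const[of a b c] unfolding set_integrable_def by simp

lemma integral_indicator_Icc_const:
  "a \<le> b \<Longrightarrow> (LINT s|lborel. indicator {a..b::real} s * (c::real)) = c * (b - a)"
  using set_integral_const[of "{a..b}" lborel c] unfolding set_lebesgue_integral_def by simp

lemma L2on_borel_measurable: "L2on A f \<Longrightarrow> (\<lambda>a. indicator {0..A} a * f a) \<in> borel_measurable lborel"
  unfolding L2on_def set_borel_measurable_def by simp

lemma L2on_square_integrable: "L2on A f \<Longrightarrow> integrable lborel (\<lambda>a. indicator {0..A} a * (f a)\<^sup>2)"
  unfolding L2on_def set_integrable_def by simp

lemma L2on_integrable_mult:
  assumes f: "L2on A f" and g: "L2on A g"
  shows "integrable lborel (\<lambda>a. indicator {0..A} a * (f a * g a))"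
proof (rule Bochner_Integration.integrable_bound)
  show "integrable lborel (\<lambda>a. indicator {0..A} a * (f a)\<^sup>2 + indicator {0..A} a * (g a)\<^sup>2)"
    using L2on_square_integrable[OF f] L2on_square_integrable[OF g] by simp
  have "(\<lambda>a. (indicator {0..A} a * f a) * (indicator {0..A} a * g a)) \<in> borel_measurable lborel"
    using L2on_borel_measurable[OF f] L2on_borel_measurable[OF g] by measurable
  moreover have "(\<lambda>a. (indicator {0..A} a * f a) * (indicator {0..A} a * g a))
      = (\<lambda>a. indicator {0..A} a * (f a * g a))"
    by (auto simp: indicator_def)
  ultimately show "(\<lambda>a. indicator {0..A} a * (f a * g a)) \<in> borel_measurable lborel"
    by simp
  have "\<bar>f x * g x\<bar> \<le> (f x)\<^sup>2 + (g x)\<^sup>2" for x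
  proof -
    have "2 * (\<bar>f x\<bar> * \<bar>g x\<bar>) \<le> (f x)\<^sup>2 + (g x)\<^sup>2"
      using sum_squares_bound[of "\<bar>f x\<bar>" "\<bar>g x\<bar>"] by simp
    moreover have "0 \<le> \<bar>f x\<bar> * \<bar>g x\<bar>" by simp
    ultimately show ?thesis unfolding abs_mult by linarith
  qed
  then show "AE x in lborel. norm (indicator {0..A} x * (f x * g x))
       \<le> norm (indicator {0..A} x * (f x)\<^sup>2 + indicator {0..A} x * (g x)\<^sup>2)"
    by (intro AE_I2) (simp add: indicator_def)
qed

lemma L2on_const: "L2on A (\<lambda>a. c)"
  unfolding L2on_def set_borel_measurable_def
  using set_integrable_Icc_const[of 0 A "c\<^sup>2"] by simp

lemma L2on_integrable: "L2on A f \<Longrightarrow> integrable lborel (\<lambda>a. indicator {0..A} a * f a)"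
  using L2on_integrable_mult[OF _ L2on_const[of A 1]] by simp

lemma L2on_diff:
  assumes f: "L2on A f" and g: "L2on A g"
  shows "L2on A (\<lambda>a. f a - g a)"
proof -
  have "(\<lambda>a. indicator {0..A} a * (f a - g a)) \<in> borel_measurable lborel"
    using L2on_borel_measurable[OF f] L2on_borel_measurable[OF g] by (simp add: right_diff_distrib)
  moreover have "integrable lborel (\<lambda>a. indicator {0..A} a * (f a)\<^sup>2
      - 2 * (indicator {0..A} a * (f a * g a)) + indicator {0..A} a * (g a)\<^sup>2)"
    using L2on_square_integrable[OF f] L2on_square_integrable[OF g] L2on_integrable_mult[OF f g] by auto
  moreover have "(\<lambda>a. indicator {0..A} a * (f a)\<^sup>2 - 2 * (indicator {0..A} a * (f a * g a))
      + indicator {0..A} a * (g a)\<^sup>2) = (\<lambda>a. indicator {0..A} a * (f a - g a)\<^sup>2)"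
    by (auto simp: indicator_def power2_eq_square algebra_simps)
  ultimately show ?thesis
    unfolding L2on_def set_borel_measurable_def set_integrable_def by simp
qed

lemma Linfon_imp_L2on:
  assumes "Linfon A k" shows "L2on A k"
proof -
  obtain C where C: "AE a in lborel. a \<in> {0..A} \<longrightarrow> \<bar>k a\<bar> \<le> C"
    and m: "(\<lambda>a. indicator {0..A} a * k a) \<in> borel_measurable lborel"
    using assms unfolding Linfon_def set_borel_measurable_def by auto
  have "(\<lambda>a. (indicator {0..A} a * k a)\<^sup>2) \<in> borel_measurable lborel" using m by measurable
  moreover have "(\<lambda>a. (indicator {0..A} a * k a)\<^sup>2) = (\<lambda>a. indicator {0..A} a * (k a)\<^sup>2)"
    by (auto simp: indicator_def power2_eq_square)
  ultimately have m2: "(\<lambda>a. indicator {0..A} a * (k a)\<^sup>2) \<in> borel_measurable lborel"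
    by simp
  have "AE a in lborel. norm (indicator {0..A} a * (k a)\<^sup>2) \<le> norm (indicator {0..A} a * C\<^sup>2)"
    using C
  proof eventually_elim
    case (elim a)
    then have "a \<in> {0..A} \<Longrightarrow> (k a)\<^sup>2 \<le> C\<^sup>2"
      by (metis abs_ge_zero order_trans power2_abs power_mono)
    then show ?case by (auto simp: indicator_def)
  qed
  then have "integrable lborel (\<lambda>a. indicator {0..A} a * (k a)\<^sup>2)"
    by (rule Bochner_Integration.integrable_bound[OF integrable_indicator_Icc_const m2])
  then show ?thesis using m unfolding L2on_def set_borel_measurable_def set_integrable_def by simp
qed

lemma nonneg_quadratic_imp_discriminant_le:
  fixes G I H :: real
  assumes "G \<ge> 0" "\<And>l. 0 \<le> l\<^sup>2 * G + 2 * l * I + H"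
  shows "I\<^sup>2 \<le> G * H"
proof (cases "G = 0")
  case True
  have "I = 0"
  proof (rule ccontr)
    assume "I \<noteq> 0"
    then show False
      using True assms(2)[of "- (H + 1) / (2 * I)"] by (simp add: field_simps)
  qed
  then show ?thesis using True by simp
next
  case False
  then have "G > 0" using assms(1) by simp
  then show ?thesis
    using assms(2)[of "- I / G"] by (simp add: power2_eq_square field_simps)
qed

lemma L2on_Cauchy_Schwarz:
  assumes f: "L2on A f" and g: "L2on A g"
  shows "(LINT a:{0..A}|lborel. f a * g a)\<^sup>2
    \<le> (LINT a:{0..A}|lborel. (f a)\<^sup>2) * (LINT a:{0..A}|lborel. (g a)\<^sup>2)"
proof (rule nonneg_quadratic_imp_discriminant_le)
  show "0 \<le> (LINT a:{0..A}|lborel. (f a)\<^sup>2)"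
    unfolding set_lebesgue_integral_def by (intro integral_nonneg_AE) auto
  fix l :: real
  have "0 \<le> (LINT a|lborel. indicator {0..A} a * (l * f a + g a)\<^sup>2)"
    by (intro integral_nonneg_AE) auto
  also have "(\<lambda>a. indicator {0..A} a * (l * f a + g a)\<^sup>2) = (\<lambda>a. l\<^sup>2 * (indicator {0..A} a * (f a)\<^sup>2)
      + 2 * l * (indicator {0..A} a * (f a * g a)) + indicator {0..A} a * (g a)\<^sup>2)"
    by (auto simp: indicator_def power2_eq_square algebra_simps)
  finally show "0 \<le> l\<^sup>2 * (LINT a:{0..A}|lborel. (f a)\<^sup>2) + 2 * l * (LINT a:{0..A}|lborel. f a * g a)
      + (LINT a:{0..A}|lborel. (g a)\<^sup>2)"
    using L2on_square_integrable[OF f] L2on_square_integrable[OF g] L2on_integrable_mult[OF f g]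
    by (simp add: set_lebesgue_integral_def)
qed

lemma L2on_pairing_continuous:
  fixes x :: "real \<Rightarrow> real \<Rightarrow> real"
  assumes g: "L2on A g" and x: "\<forall>t\<ge>0. L2on A (\<lambda>a. x a t)"
    and x_cont: "\<forall>t\<ge>0. ((\<lambda>s. LINT a:{0..A}|lborel. (x a s - x a t)\<^sup>2) \<longlongrightarrow> 0) (at t within {0..})"
  shows "continuous_on {0..} (\<lambda>t. LINT a:{0..A}|lborel. g a * x a t)"
  unfolding continuous_on_def
proof (intro ballI)
  fix t :: real assume "t \<in> {0..}"
  then have t: "t \<ge> 0" by simp
  define I where "I s = (LINT a:{0..A}|lborel. g a * x a s)" for s
  define G where "G = (LINT a:{0..A}|lborel. (g a)\<^sup>2)"
  define H where "H s = (LINT a:{0..A}|lborel. (x a s - x a t)\<^sup>2)" for s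
  have "\<bar>I s - I t\<bar> \<le> sqrt (G * H s)" if s: "s \<ge> 0" for s
  proof -
    have "I s - I t = (LINT a:{0..A}|lborel. g a * (x a s - x a t))"
      using L2on_integrable_mult[OF g x[rule_format, OF s]] L2on_integrable_mult[OF g x[rule_format, OF t]]
      by (simp add: I_def set_lebesgue_integral_def right_diff_distrib)
    then have "(I s - I t)\<^sup>2 \<le> G * H s"
      unfolding G_def H_def using L2on_Cauchy_Schwarz[OF g L2on_diff[OF x[rule_format, OF s] x[rule_format, OF t]]]
      by simp
    then show ?thesis using real_sqrt_le_mono by fastforce
  qed
  then have "eventually (\<lambda>s. norm (I s - I t) \<le> sqrt (G * H s)) (at t within {0..})"
    by (auto simp: eventually_at_filter)
  moreover have "((\<lambda>s. sqrt (G * H s)) \<longlongrightarrow> 0) (at t within {0..})"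
    using tendsto_real_sqrt[OF tendsto_mult_left[OF x_cont[rule_format, OF t], of G]] by (simp add: H_def)
  ultimately have "((\<lambda>s. I s - I t) \<longlongrightarrow> 0) (at t within {0..})"
    by (rule Lim_null_comparison)
  then show "(I \<longlongrightarrow> I t) (at t within {0..})"
    by (simp add: LIM_zero_iff)
qed

lemma locint_indefinite_integral_continuous:
  assumes "locint A f"
  shows "continuous_on {0..<A} (\<lambda>a. LINT s:{0..a}|lborel. f s)"
  unfolding continuous_on_eq_continuous_within
proof
  fix a assume a: "a \<in> {0..<A}"
  define b where "b = (a + A) / 2"
  have b: "a < b" "b < A" using a by (auto simp: b_def)
  have f: "set_integrable lborel {0..b} f" using assms a b unfolding locint_def by auto
  have "continuous_on {0..b} (\<lambda>c. integral {0..c} f)"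
    by (rule indefinite_integral_continuous_1[OF set_borel_integral_eq_integral(1)[OF f]])
  then have "continuous_on {0..b} (\<lambda>c. LINT s:{0..c}|lborel. f s)"
  proof (rule continuous_on_eq)
    fix c assume "c \<in> {0..b}"
    then show "integral {0..c} f = (LINT s:{0..c}|lborel. f s)"
      by (intro set_borel_integral_eq_integral(2)[symmetric] set_integrable_subset[OF f]) auto
  qed
  then have "continuous (at a within {0..b}) (\<lambda>c. LINT s:{0..c}|lborel. f s)"
    using a b by (simp add: continuous_on_eq_continuous_within)
  moreover have "at a within {0..<A} = at a within {0..b}"
    using b by (intro at_within_nhd[where S="{..<b}"]) auto
  ultimately show "continuous (at a within {0..<A}) (\<lambda>c. LINT s:{0..c}|lborel. f s)"
    by simp
qed

lemma integral_pos_of_pos_on_interval: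
  fixes f :: "real \<Rightarrow> real"
  assumes f: "integrable lborel f" "\<And>x. 0 \<le> f x"
    and ab: "a < b" and pos: "\<And>x. a < x \<Longrightarrow> x < b \<Longrightarrow> 0 < f x"
  shows "0 < integral\<^sup>L lborel f"
proof (rule ccontr)
  assume "\<not> 0 < integral\<^sup>L lborel f"
  moreover have "0 \<le> integral\<^sup>L lborel f"
    using f(2) by (intro integral_nonneg_AE) simp
  ultimately have "integral\<^sup>L lborel f = 0" by simp
  then have "AE x in lborel. f x = 0"
    using integral_nonneg_eq_0_iff_AE[OF f(1)] f(2) by simp
  then have "AE x in lborel. x \<notin> {a<..<b}"
    by eventually_elim (use pos in force)
  then have "emeasure lborel {a<..<b} = 0"
    by (subst (asm) AE_iff_measurable[of "{a<..<b}"]) auto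
  then show False using ab by simp
qed

lemma indicator_Icc_fst_snd_measurable[measurable]:
  "(\<lambda>p::real \<times> real. indicator {fst p..A} (snd p) :: ennreal) \<in> borel_measurable (lborel \<Otimes>\<^sub>M lborel)"
proof -
  have "(\<lambda>p::real \<times> real. of_bool (fst p \<le> snd p \<and> snd p \<le> A) :: ennreal)
      \<in> borel_measurable (lborel \<Otimes>\<^sub>M lborel)"
    by measurable
  then show ?thesis by (simp add: indicator_def)
qed

locale age_structured_species =
  fixes A z :: real and mu k xs W x0 :: "real \<Rightarrow> real" and x :: "real \<Rightarrow> real \<Rightarrow> real"
  assumes A_pos: "A > 0"
    and mu_nonneg: "\<forall>a\<in>{0..A}. mu a \<ge> 0"
    and mu_locint: "locint A mu"
    and k_Linfon: "Linfon A k"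
    and k_nonneg: "\<forall>a\<in>{0..A}. k a \<ge> 0"
    and steady: "steady_profile A mu z xs"
    and ktilde_integral: "(LINT a:{0..A}|lborel. ktilde mu z k a) = 1"
    and W_continuous: "continuous_on {0..} W"
    and solution: "char_solution A mu k W x x0"
    and x_pos: "\<forall>a t. 0 \<le> a \<and> a < A \<and> 0 \<le> t \<longrightarrow> x a t > 0"
begin

definition "cum_mu a = (LINT s:{0..a}|lborel. mu s)"
definition "cum_W t = (LINT r:{0..t}|lborel. W r)"

lemma mu_set_integrable: "0 \<le> a \<Longrightarrow> b < A \<Longrightarrow> set_integrable lborel {a..b} mu"
proof (cases "a \<le> b")
  case True
  assume "0 \<le> a" "b < A"
  then have "set_integrable lborel {0..b} mu"
    using mu_locint True unfolding locint_def by auto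
  then show ?thesis
    by (rule set_integrable_subset) (use \<open>0 \<le> a\<close> in auto)
qed (simp add: set_integrable_def)

lemma cum_mu_split: "0 \<le> a \<Longrightarrow> a \<le> b \<Longrightarrow> b < A \<Longrightarrow> cum_mu b = cum_mu a + (LINT s:{a..b}|lborel. mu s)"
  unfolding cum_mu_def by (rule set_integral_Icc_split[OF mu_set_integrable]) auto

lemma mu_set_integral_nonneg: "0 \<le> a \<Longrightarrow> b \<le> A \<Longrightarrow> (LINT s:{a..b}|lborel. mu s) \<ge> 0"
  unfolding set_lebesgue_integral_def
  using mu_nonneg by (intro integral_nonneg_AE AE_I2) (auto simp: indicator_def)

lemma cum_mu_mono: "0 \<le> a \<Longrightarrow> a \<le> b \<Longrightarrow> b < A \<Longrightarrow> cum_mu a \<le> cum_mu b"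
  using cum_mu_split[of a b] mu_set_integral_nonneg[of a b] by auto

lemma xs0_pos: "xs 0 > 0"
  using steady unfolding steady_profile_def by auto

lemma xs_eq:
  assumes "0 \<le> a" "a < A"
  shows "xs a = xs 0 * exp (- (cum_mu a + z * a))"
proof -
  have "xs a = xs 0 * exp (- (LINT s:{0..a}|lborel. mu s + z))"
    using steady assms unfolding steady_profile_def by blast
  then show ?thesis
    using set_integral_Icc_add_const[OF mu_set_integrable[of 0 a], of z] assms
    unfolding cum_mu_def by simp
qed

lemma xs_pos: "0 \<le> a \<Longrightarrow> a < A \<Longrightarrow> xs a > 0"
  by (subst xs_eq) (use xs0_pos in auto)

lemma xs_continuous: "continuous_on {0..<A} xs"
proof -
  have "continuous_on {0..<A} (\<lambda>a. xs 0 * exp (- (cum_mu a + z * a)))"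
    using locint_indefinite_integral_continuous[OF mu_locint]
    unfolding cum_mu_def[abs_def] by (intro continuous_intros)
  then show ?thesis
  proof (rule continuous_on_eq)
    fix a assume "a \<in> {0..<A}"
    then show "xs 0 * exp (- (cum_mu a + z * a)) = xs a" using xs_eq[of a] by simp
  qed
qed

text \<open>The mortality may have infinite integral up to \<open>A\<close>, so \<open>xs\<close> is bounded below
  only on compact subintervals \<open>[0, d]\<close>.\<close>

lemma xs_lower_bound: "0 \<le> a \<Longrightarrow> a \<le> d \<Longrightarrow> d < A \<Longrightarrow> xs 0 * exp (- (cum_mu d + \<bar>z\<bar> * A)) \<le> xs a"
proof -
  assume a: "0 \<le> a" "a \<le> d" "d < A"
  have "\<bar>z * a\<bar> \<le> \<bar>z\<bar> * A"
    using a by (simp add: abs_mult mult_left_mono)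
  then have "z * a \<le> \<bar>z\<bar> * A" by linarith
  then have "- (cum_mu d + \<bar>z\<bar> * A) \<le> - (cum_mu a + z * a)"
    using cum_mu_mono[of a d] a by linarith
  then show ?thesis using xs_eq[of a] a xs0_pos by simp
qed

lemma xs_upper_bound: "0 \<le> a \<Longrightarrow> a \<le> s \<Longrightarrow> s < A \<Longrightarrow> xs s \<le> xs a * exp (\<bar>z\<bar> * A)"
proof -
  assume a: "0 \<le> a" "a \<le> s" "s < A"
  have "\<bar>z * (a - s)\<bar> \<le> \<bar>z\<bar> * A"
    using a by (simp add: abs_mult mult_left_mono)
  then have "z * a - z * s \<le> \<bar>z\<bar> * A" by (simp add: algebra_simps)
  then have "- (cum_mu s + z * s) \<le> - (cum_mu a + z * a) + \<bar>z\<bar> * A"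
    using cum_mu_mono[of a s] a by linarith
  then have "exp (- (cum_mu s + z * s)) \<le> exp (- (cum_mu a + z * a) + \<bar>z\<bar> * A)"
    by simp
  also have "\<dots> = exp (- (cum_mu a + z * a)) * exp (\<bar>z\<bar> * A)"
    by (simp add: mult_exp_exp)
  finally show ?thesis using xs_eq[of a] xs_eq[of s] a xs0_pos by simp
qed

lemma ktilde_eq: "0 \<le> a \<Longrightarrow> a < A \<Longrightarrow> ktilde mu z k a = k a * xs a / xs 0"
  using xs_eq[of a] xs0_pos set_integral_Icc_add_const[OF mu_set_integrable[of 0 a], of z]
  unfolding ktilde_def cum_mu_def by simp

lemma x_characteristic:
  assumes "0 \<le> a" "0 \<le> t" "0 \<le> s" "a + s < A"
  shows "x (a + s) (t + s) = x a t * exp (- ((LINT r:{a..a+s}|lborel. mu r) + (LINT r:{0..s}|lborel. W (t + r))))"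
proof -
  have "a < A" using assms by linarith
  then show ?thesis using assms solution unfolding char_solution_def by blast
qed

lemma x_L2on: "t \<ge> 0 \<Longrightarrow> L2on A (\<lambda>a. x a t)"
  using solution unfolding char_solution_def by blast

lemma x_L2_continuous: "\<forall>t\<ge>0. ((\<lambda>s. LINT a:{0..A}|lborel. (x a s - x a t)\<^sup>2) \<longlongrightarrow> 0) (at t within {0..})"
  using solution unfolding char_solution_def by blast

lemma x_boundary: "t \<ge> 0 \<Longrightarrow> x 0 t = (LINT a:{0..A}|lborel. k a * x a t)"
  using solution unfolding char_solution_def by blast

lemma x_initial: "0 < a \<Longrightarrow> a < A \<Longrightarrow> x a 0 = x0 a"
  using solution unfolding char_solution_def by blast

lemma x_boundary_continuous: "continuous_on {0..} (\<lambda>t. x 0 t)"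
proof -
  have "continuous_on {0..} (\<lambda>t. LINT a:{0..A}|lborel. k a * x a t)"
    using Linfon_imp_L2on[OF k_Linfon] x_L2on x_L2_continuous by (intro L2on_pairing_continuous) auto
  then show ?thesis by (rule continuous_on_eq) (simp add: x_boundary)
qed

lemma cum_W_eq_integral: "0 \<le> t \<Longrightarrow> cum_W t = integral {0..t} W"
  unfolding cum_W_def
  by (intro set_borel_integral_eq_integral(2) borel_integrable_compact[unfolded set_integrable_def[symmetric]]
      continuous_on_subset[OF W_continuous]) auto

lemma cum_W_0: "cum_W 0 = 0"
  using cum_W_eq_integral[of 0] by simp

lemma W_shift_integral: "0 \<le> t \<Longrightarrow> 0 \<le> s \<Longrightarrow> (LINT r:{0..s}|lborel. W (t + r)) = cum_W (t + s) - cum_W t"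
proof -
  assume t: "0 \<le> t" and s: "0 \<le> s"
  have "continuous_on {0..s} (\<lambda>r. W (t + r))"
    using t by (intro continuous_on_compose2[OF W_continuous]) (auto intro!: continuous_intros)
  then have "(LINT r:{0..s}|lborel. W (t + r)) = integral {0..s} (W \<circ> ((+) t))"
    unfolding o_def
    by (intro set_borel_integral_eq_integral(2) borel_integrable_compact[unfolded set_integrable_def[symmetric]]) auto
  also have "\<dots> = integral {t..t+s} W"
    using integral_shift_Icc_real[of 0 s W t] by (simp add: add.commute)
  also have "\<dots> = integral {0..t+s} W - integral {0..t} W"
    using Henstock_Kurzweil_Integration.integral_combine[of 0 t "t+s" W] t s
      integrable_continuous_real[OF continuous_on_subset[OF W_continuous, of "{0..t+s}"]]
    by auto
  finally show ?thesis using cum_W_eq_integral t s by simp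
qed

lemma cum_W_has_derivative: "0 \<le> t \<Longrightarrow> (cum_W has_real_derivative W t) (at t within {0..})"
proof -
  assume t: "0 \<le> t"
  have "((\<lambda>u. integral {0..u} W) has_real_derivative W t) (at t within {0..t+1})"
    using t by (intro integral_has_real_derivative continuous_on_subset[OF W_continuous]) auto
  then have "(cum_W has_real_derivative W t) (at t within {0..t+1})"
    by (rule has_field_derivative_transform_within[where d=1]) (use t cum_W_eq_integral in auto)
  moreover have "at t within {0..t+1} = at t within {0..}"
    by (rule at_within_nhd[where S="{t - 1 <..< t + 1}"]) auto
  ultimately show ?thesis by simp
qed

lemma cum_W_continuous: "continuous_on {0..} cum_W"
  unfolding continuous_on_eq_continuous_within using cum_W_has_derivative DERIV_continuous by blast

definition "growth t = exp (z * t - cum_W t)"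
definition "normalized a t = x a t / (xs a * growth t)"
definition "cohort r = (if 0 \<le> r then normalized 0 r else if - A < r then normalized (- r) 0 else 0)"

lemma growth_pos: "growth t > 0"
  unfolding growth_def by simp

lemma growth_0: "growth 0 = 1"
  unfolding growth_def using cum_W_0 by simp

lemma growth_continuous: "continuous_on {0..} growth"
  unfolding growth_def[abs_def] by (intro continuous_intros cum_W_continuous)

lemma normalized_eq:
  assumes "0 \<le> a" "a < A"
  shows "normalized a t = x a t * exp (cum_mu a + z * a - z * t + cum_W t) / xs 0"
proof -
  define E where "E = cum_mu a + z * a - z * t + cum_W t"
  have "xs a * growth t = xs 0 * exp (- E)"
    unfolding xs_eq[OF assms] growth_def E_def by (simp add: mult_exp_exp)
  also have "\<dots> = xs 0 / exp E"
    by (simp add: exp_minus inverse_eq_divide)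
  finally show ?thesis
    unfolding normalized_def E_def using xs0_pos by simp
qed

lemma normalized_pos: "0 \<le> a \<Longrightarrow> a < A \<Longrightarrow> 0 \<le> t \<Longrightarrow> normalized a t > 0"
  unfolding normalized_def using x_pos xs_pos growth_pos by simp

text \<open>The factor \<open>exp (- \<integral> mu - \<integral> W)\<close> accumulated along a characteristic is exactly
  the one by which \<open>xs a * growth t\<close> changes.\<close>

lemma normalized_characteristic:
  assumes "0 \<le> a" "0 \<le> t" "0 \<le> s" "a + s < A"
  shows "normalized (a + s) (t + s) = normalized a t"
proof -
  have "x (a + s) (t + s)
      = x a t * exp (- ((cum_mu (a + s) - cum_mu a) + (cum_W (t + s) - cum_W t)))"
    using x_characteristic[OF assms] cum_mu_split[of a "a + s"] W_shift_integral[of t s] assms by simp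
  moreover have "exp (- ((cum_mu (a + s) - cum_mu a) + (cum_W (t + s) - cum_W t)))
      * exp (cum_mu (a + s) + z * (a + s) - z * (t + s) + cum_W (t + s))
      = exp (cum_mu a + z * a - z * t + cum_W t)"
    by (simp add: mult_exp_exp algebra_simps)
  ultimately show ?thesis
    using normalized_eq[of "a + s" "t + s"] normalized_eq[of a t] assms by simp
qed

lemma normalized_eq_cohort: "0 \<le> a \<Longrightarrow> a < A \<Longrightarrow> 0 \<le> t \<Longrightarrow> normalized a t = cohort (t - a)"
proof -
  assume a: "0 \<le> a" "a < A" and t: "0 \<le> t"
  show ?thesis
  proof (cases "a \<le> t")
    case True
    then have "normalized (0 + a) (t - a + a) = normalized 0 (t - a)"
      using a t by (intro normalized_characteristic) auto
    then show ?thesis unfolding cohort_def using True by simp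
  next
    case False
    then have "normalized (a - t + t) (0 + t) = normalized (a - t) 0"
      using a t by (intro normalized_characteristic) auto
    then show ?thesis unfolding cohort_def using False a t by simp
  qed
qed

lemma cohort_pos: "- A < r \<Longrightarrow> cohort r > 0"
  unfolding cohort_def using normalized_pos A_pos by auto

lemma cohort_nonneg: "cohort r \<ge> 0"
proof (cases "- A < r")
  case True
  then show ?thesis using cohort_pos[OF True] by simp
next
  case False
  then show ?thesis using A_pos by (simp add: cohort_def)
qed

lemma cohort_measurable[measurable]: "cohort \<in> borel_measurable borel"
proof -
  have "xs 0 * growth r \<noteq> 0" for r
    using xs0_pos growth_pos[of r] by simp
  then have "continuous_on {0..} (\<lambda>r. normalized 0 r)"
    unfolding normalized_def by (intro continuous_intros x_boundary_continuous growth_continuous) auto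
  then have m_pos: "(\<lambda>r. indicator {0..} r *\<^sub>R normalized 0 r) \<in> borel_measurable borel"
    by (intro borel_measurable_continuous_on_indicator) auto
  have "continuous_on {0<..<A} (\<lambda>a. 1 / xs a)"
  proof (intro continuous_intros continuous_on_subset[OF xs_continuous])
    show "\<forall>a\<in>{0<..<A}. xs a \<noteq> 0" using xs_pos by (simp add: less_imp_neq[symmetric])
  qed auto
  then have m_inv: "(\<lambda>a. indicator {0<..<A} a *\<^sub>R (1 / xs a)) \<in> borel_measurable borel"
    by (intro borel_measurable_continuous_on_indicator) auto
  have m_init: "(\<lambda>a. indicator {0..A} a * x a 0) \<in> borel_measurable borel"
    using L2on_borel_measurable[OF x_L2on[of 0]] by simp
  have "(\<lambda>a. (indicator {0..A} a * x a 0) * (indicator {0<..<A} a *\<^sub>R (1 / xs a)))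
      \<in> borel_measurable borel"
    by (rule borel_measurable_times[OF m_init m_inv])
  from measurable_compose[OF borel_measurable_uminus[OF measurable_ident_sets[OF refl]] this]
  have m_neg: "(\<lambda>r. (indicator {0..A} (- r) * x (- r) 0) * (indicator {0<..<A} (- r) *\<^sub>R (1 / xs (- r))))
      \<in> borel_measurable borel"
    by (simp add: o_def)
  have "cohort = (\<lambda>r. indicator {0..} r *\<^sub>R normalized 0 r
      + (indicator {0..A} (- r) * x (- r) 0) * (indicator {0<..<A} (- r) *\<^sub>R (1 / xs (- r))))"
    by (auto simp: fun_eq_iff cohort_def normalized_def growth_0 indicator_def)
  then show ?thesis using borel_measurable_add[OF m_pos m_neg] by simp
qed

definition "renewal_kernel s = indicator {0..A} s * ktilde mu z k s"

lemma renewal_kernel_integrable: "integrable lborel renewal_kernel"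
proof (rule ccontr)
  assume "\<not> integrable lborel renewal_kernel"
  then have "(LINT a:{0..A}|lborel. ktilde mu z k a) = 0"
    unfolding renewal_kernel_def[abs_def] set_lebesgue_integral_def by (simp add: not_integrable_integral_eq)
  then show False using ktilde_integral by simp
qed

lemma renewal_kernel_measurable[measurable]: "renewal_kernel \<in> borel_measurable borel"
  using borel_measurable_integrable[OF renewal_kernel_integrable] by simp

lemma renewal_kernel_nonneg: "renewal_kernel s \<ge> 0"
  unfolding renewal_kernel_def ktilde_def using k_nonneg by (auto simp: indicator_def)

lemma renewal_kernel_eq_0: "s \<notin> {0..A} \<Longrightarrow> renewal_kernel s = 0"
  unfolding renewal_kernel_def by simp

lemma renewal_kernel_integral: "(LINT s|lborel. renewal_kernel s) = 1"
  using ktilde_integral unfolding renewal_kernel_def set_lebesgue_integral_def by simp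

lemma renewal_kernel_nn_integral: "(\<integral>\<^sup>+ s. ennreal (renewal_kernel s) \<partial>lborel) = 1"
  using nn_integral_eq_integral[OF renewal_kernel_integrable] renewal_kernel_nonneg renewal_kernel_integral by simp

lemma cohort_renewal:
  assumes r: "0 \<le> r"
  shows "integrable lborel (\<lambda>a. renewal_kernel a * cohort (r - a))"
    and "cohort r = (LINT a|lborel. renewal_kernel a * cohort (r - a))"
proof -
  define g where "g a = indicator {0..A} a * (k a * x a r) / (xs 0 * growth r)" for a
  have g_integrable: "integrable lborel g"
    unfolding g_def using L2on_integrable_mult[OF Linfon_imp_L2on[OF k_Linfon] x_L2on[OF r]] by simp
  have g_eq: "g a = renewal_kernel a * cohort (r - a)" if "a \<notin> {A}" for a
  proof (cases "a \<in> {0..A}")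
    case True
    then have a: "0 \<le> a" "a < A" using that by auto
    have "renewal_kernel a * cohort (r - a) = k a * xs a / xs 0 * (x a r / (xs a * growth r))"
      unfolding renewal_kernel_def using True ktilde_eq[OF a] normalized_eq_cohort[OF a r]
      by (simp add: normalized_def)
    also have "\<dots> = k a * x a r / (xs 0 * growth r)"
      using xs_pos[OF a] by (simp add: field_simps)
    finally show ?thesis unfolding g_def using True by simp
  qed (simp add: g_def renewal_kernel_def)
  show "integrable lborel (\<lambda>a. renewal_kernel a * cohort (r - a))"
    using integrable_eq_except_finite[of "{A}" g, OF _ _ g_integrable] g_eq by auto
  have "cohort r = x 0 r / (xs 0 * growth r)"
    unfolding cohort_def normalized_def using r by simp
  also have "\<dots> = (LINT a|lborel. g a)"
    unfolding g_def x_boundary[OF r] set_lebesgue_integral_def by simp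
  also have "\<dots> = (LINT a|lborel. renewal_kernel a * cohort (r - a))"
    by (rule integral_eq_except_finite[of "{A}"]) (use g_eq in auto)
  finally show "cohort r = (LINT a|lborel. renewal_kernel a * cohort (r - a))" .
qed

lemma cohort_renewal_nn_integral:
  assumes "0 \<le> r"
  shows "ennreal (cohort r) = (\<integral>\<^sup>+ s. ennreal (renewal_kernel s) * ennreal (cohort (r - s)) \<partial>lborel)"
proof -
  have "(\<integral>\<^sup>+ s. ennreal (renewal_kernel s * cohort (r - s)) \<partial>lborel) = ennreal (cohort r)"
    using nn_integral_eq_integral[OF cohort_renewal(1)[OF assms]] cohort_renewal(2)[OF assms]
      renewal_kernel_nonneg cohort_nonneg by simp
  then show ?thesis using renewal_kernel_nonneg cohort_nonneg by (simp add: ennreal_mult)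
qed

definition "cohort_mass \<alpha> \<beta> = (\<integral>\<^sup>+ r. indicator {\<alpha>..\<beta>} r * ennreal (cohort r) \<partial>lborel)"

lemma cohort_mass_measurable[measurable]:
  assumes [measurable]: "f \<in> borel_measurable borel" "g \<in> borel_measurable borel"
  shows "(\<lambda>s. cohort_mass (f s) (g s)) \<in> borel_measurable borel"
proof -
  have "(\<lambda>s. \<integral>\<^sup>+ r. of_bool (f s \<le> r \<and> r \<le> g s) * ennreal (cohort r) \<partial>lborel) \<in> borel_measurable borel"
    by measurable
  then show ?thesis unfolding cohort_mass_def by (simp add: indicator_def of_bool_def)
qed

lemma cohort_mass_reflect:
  "(\<integral>\<^sup>+ a. indicator {0..s} a * ennreal (cohort (T - a)) \<partial>lborel) = cohort_mass (T - s) T"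
proof -
  have "cohort_mass (T - s) T
      = (\<integral>\<^sup>+ a. indicator {T - s..T} (T + (-1) * a) * ennreal (cohort (T + (-1) * a)) \<partial>lborel)"
    unfolding cohort_mass_def
    using nn_integral_real_affine[of "\<lambda>r. indicator {T - s..T} r * ennreal (cohort r)" "-1" T] by simp
  also have "\<dots> = (\<integral>\<^sup>+ a. indicator {0..s} a * ennreal (cohort (T - a)) \<partial>lborel)"
    by (auto intro!: nn_integral_cong simp: indicator_def)
  finally show ?thesis by simp
qed

lemma cohort_mass_translate:
  "(\<integral>\<^sup>+ r. indicator {\<tau>..T} r * ennreal (cohort (r - s)) \<partial>lborel) = cohort_mass (\<tau> - s) (T - s)"
proof -
  have "cohort_mass (\<tau> - s) (T - s)
      = (\<integral>\<^sup>+ r. indicator {\<tau> - s..T - s} (- s + 1 * r) * ennreal (cohort (- s + 1 * r)) \<partial>lborel)"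
    unfolding cohort_mass_def
    using nn_integral_real_affine[of "\<lambda>r. indicator {\<tau> - s..T - s} r * ennreal (cohort r)" 1 "- s"] by simp
  also have "\<dots> = (\<integral>\<^sup>+ r. indicator {\<tau>..T} r * ennreal (cohort (r - s)) \<partial>lborel)"
    by (auto intro!: nn_integral_cong simp: indicator_def)
  finally show ?thesis by simp
qed

lemma cohort_mass_add:
  assumes "\<alpha> \<le> \<beta>" "\<beta> \<le> \<gamma>"
  shows "cohort_mass \<alpha> \<gamma> = cohort_mass \<alpha> \<beta> + cohort_mass \<beta> \<gamma>"
proof -
  have "cohort_mass \<alpha> \<beta> + cohort_mass \<beta> \<gamma>
      = (\<integral>\<^sup>+ r. indicator {\<alpha>..\<beta>} r * ennreal (cohort r) + indicator {\<beta>..\<gamma>} r * ennreal (cohort r) \<partial>lborel)"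
    unfolding cohort_mass_def by (rule nn_integral_add[symmetric]) measurable
  also have "\<dots> = cohort_mass \<alpha> \<gamma>"
    unfolding cohort_mass_def using AE_lborel_singleton[of \<beta>] assms
    by (intro nn_integral_cong_AE) (auto simp: indicator_def elim!: eventually_mono)
  finally show ?thesis by simp
qed

lemma cohort_mass_renewal:
  assumes "0 \<le> \<tau>"
  shows "cohort_mass \<tau> T = (\<integral>\<^sup>+ s. ennreal (renewal_kernel s) * cohort_mass (\<tau> - s) (T - s) \<partial>lborel)"
proof -
  have "cohort_mass \<tau> T = (\<integral>\<^sup>+ r. \<integral>\<^sup>+ s. indicator {\<tau>..T} r
      * (ennreal (renewal_kernel s) * ennreal (cohort (r - s))) \<partial>lborel \<partial>lborel)"
    unfolding cohort_mass_def
  proof (rule nn_integral_cong)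
    fix r :: real
    show "indicator {\<tau>..T} r * ennreal (cohort r) = (\<integral>\<^sup>+ s. indicator {\<tau>..T} r
        * (ennreal (renewal_kernel s) * ennreal (cohort (r - s))) \<partial>lborel)"
    proof (cases "r \<in> {\<tau>..T}")
      case True
      then show ?thesis using cohort_renewal_nn_integral[of r] assms by simp
    qed simp
  qed
  also have "\<dots> = (\<integral>\<^sup>+ s. \<integral>\<^sup>+ r. indicator {\<tau>..T} r
      * (ennreal (renewal_kernel s) * ennreal (cohort (r - s))) \<partial>lborel \<partial>lborel)"
    by (rule lborel_pair.Fubini') measurable
  also have "\<dots> = (\<integral>\<^sup>+ s. ennreal (renewal_kernel s) * cohort_mass (\<tau> - s) (T - s) \<partial>lborel)"
  proof (rule nn_integral_cong)
    fix s :: real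
    have "(\<integral>\<^sup>+ r. indicator {\<tau>..T} r * (ennreal (renewal_kernel s) * ennreal (cohort (r - s))) \<partial>lborel)
        = (\<integral>\<^sup>+ r. ennreal (renewal_kernel s) * (indicator {\<tau>..T} r * ennreal (cohort (r - s))) \<partial>lborel)"
      by (simp add: ac_simps)
    also have "\<dots> = ennreal (renewal_kernel s) * cohort_mass (\<tau> - s) (T - s)"
      by (subst nn_integral_cmult) (simp_all add: cohort_mass_translate)
    finally show "(\<integral>\<^sup>+ r. indicator {\<tau>..T} r * (ennreal (renewal_kernel s) * ennreal (cohort (r - s))) \<partial>lborel)
        = ennreal (renewal_kernel s) * cohort_mass (\<tau> - s) (T - s)" .
  qed
  finally show ?thesis .
qed

lemma cohort_le_profile:
  assumes a: "0 \<le> a" "a \<le> d" "d < A" and T: "0 \<le> T"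
  shows "cohort (T - a) \<le> x a T / (xs 0 * exp (- (cum_mu d + \<bar>z\<bar> * A)) * growth T)"
proof -
  have "xs 0 * exp (- (cum_mu d + \<bar>z\<bar> * A)) * growth T \<le> xs a * growth T"
    using xs_lower_bound[OF a] growth_pos[of T] by simp
  moreover have "0 < x a T" using x_pos a T by simp
  ultimately have "x a T / (xs a * growth T) \<le> x a T / (xs 0 * exp (- (cum_mu d + \<bar>z\<bar> * A)) * growth T)"
    using xs0_pos growth_pos[of T] xs_pos[of a] a by (intro divide_left_mono) auto
  then show ?thesis
    using normalized_eq_cohort[of a T] a T unfolding normalized_def by simp
qed

text \<open>On \<open>[\<tau>, T]\<close> the cohort function is bounded by a multiple of the reflected profile
  \<open>x(T - r, T)\<close>, which is integrable.\<close>

lemma cohort_mass_finite: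
  assumes \<tau>: "0 \<le> \<tau>" "\<tau> \<le> T" "T < \<tau> + A"
  shows "cohort_mass \<tau> T < \<infinity>"
proof -
  define d where "d = T - \<tau>"
  have d: "0 \<le> d" "d < A" and T: "0 \<le> T" using \<tau> unfolding d_def by auto
  define c where "c = 1 / (xs 0 * exp (- (cum_mu d + \<bar>z\<bar> * A)) * growth T)"
  have c: "c \<ge> 0" unfolding c_def using xs0_pos growth_pos[of T] by simp
  define h where "h a = indicator {0..A} a * x a T" for a
  have h_integrable: "integrable lborel h"
    unfolding h_def using L2on_integrable[OF x_L2on[OF T]] by simp
  have "indicator {\<tau>..T} r * ennreal (cohort r) \<le> ennreal (c * \<bar>h (T - r)\<bar>)" for r
  proof (cases "r \<in> {\<tau>..T}")
    case True
    then have a: "0 \<le> T - r" "T - r \<le> d" "T - r < A" using d unfolding d_def by auto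
    have "0 < x (T - r) T" using x_pos a T by simp
    then have "c * \<bar>h (T - r)\<bar> = x (T - r) T / (xs 0 * exp (- (cum_mu d + \<bar>z\<bar> * A)) * growth T)"
      using a unfolding c_def h_def by (simp add: indicator_def)
    then have "cohort r \<le> c * \<bar>h (T - r)\<bar>"
      using cohort_le_profile[OF a(1,2) d(2) T] by simp
    then show ?thesis using True by (simp add: ennreal_leI)
  qed simp
  then have "cohort_mass \<tau> T \<le> (\<integral>\<^sup>+ r. ennreal (c * \<bar>h (T - r)\<bar>) \<partial>lborel)"
    unfolding cohort_mass_def by (intro nn_integral_mono)
  also have "\<dots> = (\<integral>\<^sup>+ a. ennreal (c * \<bar>h a\<bar>) \<partial>lborel)"
    using nn_integral_real_affine[of "\<lambda>a. ennreal (c * \<bar>h a\<bar>)" "-1" T]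
      borel_measurable_integrable[OF h_integrable] by simp
  also have "\<dots> = (\<integral>\<^sup>+ a. ennreal (norm (c * h a)) \<partial>lborel)"
    using c by (simp add: abs_mult)
  also have "\<dots> < \<infinity>"
    using integrable_mult_right[OF h_integrable, of c] unfolding integrable_iff_bounded by simp
  finally show ?thesis .
qed

definition "tail a = (LINT s|lborel. indicator {a..A} s * renewal_kernel s)"

lemma tail_integrable: "integrable lborel (\<lambda>s. indicator {a..A} s * renewal_kernel s)"
  using integrable_mult_indicator[OF _ renewal_kernel_integrable, of "{a..A}"] by simp

lemma tail_eq: "0 \<le> a \<Longrightarrow> tail a = (LINT s:{a..A}|lborel. ktilde mu z k s)"
  unfolding tail_def set_lebesgue_integral_def renewal_kernel_def
  by (rule arg_cong[where f="integral\<^sup>L lborel"]) (auto simp: indicator_def fun_eq_iff)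

lemma tail_nonneg: "tail a \<ge> 0"
  unfolding tail_def using renewal_kernel_nonneg by (auto intro!: integral_nonneg_AE)

lemma tail_le_1: "tail a \<le> 1"
proof -
  have "tail a \<le> (LINT s|lborel. renewal_kernel s)"
    unfolding tail_def using renewal_kernel_nonneg
    by (intro integral_mono[OF tail_integrable renewal_kernel_integrable]) (auto simp: indicator_def)
  then show ?thesis using renewal_kernel_integral by simp
qed

lemma tail_measurable[measurable]: "tail \<in> borel_measurable borel"
proof -
  have "(\<lambda>(a, s). indicator {a..A} s * renewal_kernel s) \<in> borel_measurable (lborel \<Otimes>\<^sub>M lborel)"
  proof -
    have "(\<lambda>p::real \<times> real. of_bool (fst p \<le> snd p \<and> snd p \<le> A) * renewal_kernel (snd p))
        \<in> borel_measurable (lborel \<Otimes>\<^sub>M lborel)"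
      by measurable
    then show ?thesis by (simp add: indicator_def case_prod_beta)
  qed
  then have "(\<lambda>a. LINT s|lborel. indicator {a..A} s * renewal_kernel s) \<in> borel_measurable lborel"
    by (rule lborel.borel_measurable_lebesgue_integral)
  then show ?thesis unfolding tail_def[abs_def] by simp
qed

lemma tail_nn_integral:
  "ennreal (tail a) = (\<integral>\<^sup>+ s. indicator {a..A} s * ennreal (renewal_kernel s) \<partial>lborel)"
proof -
  have "(\<integral>\<^sup>+ s. ennreal (indicator {a..A} s * renewal_kernel s) \<partial>lborel) = ennreal (tail a)"
    unfolding tail_def using renewal_kernel_nonneg by (intro nn_integral_eq_integral[OF tail_integrable]) auto
  moreover have "(\<lambda>s. ennreal (indicator {a..A} s * renewal_kernel s))
      = (\<lambda>s. indicator {a..A} s * ennreal (renewal_kernel s))"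
    by (auto simp: indicator_def fun_eq_iff)
  ultimately show ?thesis by simp
qed

text \<open>Up to the factor \<open>xs 0 * growth T\<close>, this is the pairing of \<open>\<pi>\<^sub>0\<close> with \<open>x(., T)\<close>.\<close>

definition "weighted_mass T = (\<integral>\<^sup>+ a. ennreal (indicator {0..A} a * tail a * cohort (T - a)) \<partial>lborel)"

lemma weighted_mass_renewal_kernel:
  "weighted_mass T = (\<integral>\<^sup>+ s. ennreal (renewal_kernel s) * cohort_mass (T - s) T \<partial>lborel)"
proof -
  define F where "F a s = indicator {0..A} a * ennreal (cohort (T - a))
    * (indicator {a..A} s * ennreal (renewal_kernel s))" for a s
  have integral_s: "(\<integral>\<^sup>+ s. F a s \<partial>lborel) = ennreal (indicator {0..A} a * tail a * cohort (T - a))" for a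
  proof -
    have "(\<integral>\<^sup>+ s. F a s \<partial>lborel) = indicator {0..A} a * ennreal (cohort (T - a)) * ennreal (tail a)"
      unfolding F_def tail_nn_integral by (rule nn_integral_cmult) measurable
    also have "\<dots> = ennreal (indicator {0..A} a * tail a * cohort (T - a))"
    proof (cases "a \<in> {0..A}")
      case True
      then show ?thesis
        using tail_nonneg[of a] cohort_nonneg[of "T - a"] by (simp add: ennreal_mult mult.commute)
    qed simp
    finally show ?thesis .
  qed
  have integral_a: "(\<integral>\<^sup>+ a. F a s \<partial>lborel) = ennreal (renewal_kernel s) * cohort_mass (T - s) T" for s
  proof (cases "s \<in> {0..A}")
    case True
    then have "(\<integral>\<^sup>+ a. F a s \<partial>lborel)
        = (\<integral>\<^sup>+ a. ennreal (renewal_kernel s) * (indicator {0..s} a * ennreal (cohort (T - a))) \<partial>lborel)"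
      unfolding F_def by (intro nn_integral_cong) (auto simp: indicator_def mult.commute)
    also have "\<dots> = ennreal (renewal_kernel s) * cohort_mass (T - s) T"
      unfolding cohort_mass_reflect[symmetric] by (rule nn_integral_cmult) measurable
    finally show ?thesis .
  qed (simp add: F_def renewal_kernel_eq_0)
  have "weighted_mass T = (\<integral>\<^sup>+ a. \<integral>\<^sup>+ s. F a s \<partial>lborel \<partial>lborel)"
    by (simp add: weighted_mass_def integral_s)
  also have "\<dots> = (\<integral>\<^sup>+ s. \<integral>\<^sup>+ a. F a s \<partial>lborel \<partial>lborel)"
    unfolding F_def by (rule lborel_pair.Fubini'[symmetric]) measurable
  finally show ?thesis by (simp add: integral_a)
qed

text \<open>Both sides equal \<open>\<integral> renewal_kernel s * cohort_mass (\<tau> - s) T ds\<close>, by additivity of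
  the cohort mass.\<close>

lemma weighted_mass_add_cohort_mass:
  assumes "0 \<le> \<tau>" "\<tau> \<le> T"
  shows "weighted_mass T + cohort_mass \<tau> T = weighted_mass \<tau> + cohort_mass \<tau> T"
proof -
  have "weighted_mass T + cohort_mass \<tau> T = (\<integral>\<^sup>+ s. ennreal (renewal_kernel s) * cohort_mass (T - s) T
      + ennreal (renewal_kernel s) * cohort_mass (\<tau> - s) (T - s) \<partial>lborel)"
    unfolding weighted_mass_renewal_kernel[of T] cohort_mass_renewal[OF assms(1), of T]
    by (rule nn_integral_add[symmetric]) measurable
  also have "\<dots> = (\<integral>\<^sup>+ s. ennreal (renewal_kernel s) * cohort_mass (\<tau> - s) \<tau>
      + ennreal (renewal_kernel s) * cohort_mass \<tau> T \<partial>lborel)"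
  proof (rule nn_integral_cong)
    fix s :: real
    show "ennreal (renewal_kernel s) * cohort_mass (T - s) T
        + ennreal (renewal_kernel s) * cohort_mass (\<tau> - s) (T - s)
        = ennreal (renewal_kernel s) * cohort_mass (\<tau> - s) \<tau>
        + ennreal (renewal_kernel s) * cohort_mass \<tau> T"
    proof (cases "s \<in> {0..A}")
      case True
      then have "cohort_mass (\<tau> - s) (T - s) + cohort_mass (T - s) T = cohort_mass (\<tau> - s) \<tau> + cohort_mass \<tau> T"
        using cohort_mass_add[of "\<tau> - s" "T - s" T] cohort_mass_add[of "\<tau> - s" \<tau> T] assms by simp
      then show ?thesis by (metis add.commute distrib_left)
    qed (simp add: renewal_kernel_eq_0)
  qed
  also have "\<dots> = weighted_mass \<tau> + cohort_mass \<tau> T"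
    using nn_integral_multc[of "\<lambda>s. ennreal (renewal_kernel s)" lborel "cohort_mass \<tau> T"]
    by (simp add: nn_integral_add weighted_mass_renewal_kernel[of \<tau>] renewal_kernel_nn_integral)
  finally show ?thesis .
qed

lemma weighted_mass_eq_short_range:
  assumes "0 \<le> \<tau>" "\<tau> \<le> T" "T < \<tau> + A"
  shows "weighted_mass T = weighted_mass \<tau>"
proof -
  have "cohort_mass \<tau> T + weighted_mass T = cohort_mass \<tau> T + weighted_mass \<tau>"
    using weighted_mass_add_cohort_mass[OF assms(1,2)] by (simp add: add.commute)
  then show ?thesis
    using cohort_mass_finite[OF assms] by (auto simp: ennreal_add_left_cancel)
qed

lemma weighted_mass_const:
  assumes "0 \<le> T"
  shows "weighted_mass T = weighted_mass 0"
proof -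
  have "weighted_mass T = weighted_mass 0" if "0 \<le> T" "T \<le> real n * (A / 2)" for n T
    using that
  proof (induction n arbitrary: T)
    case (Suc n)
    show ?case
    proof (cases "T \<le> real n * (A / 2)")
      case False
      have "T < real n * (A / 2) + A"
        using Suc.prems(2) A_pos by (simp add: distrib_right)
      moreover have "0 \<le> real n * (A / 2)"
        using A_pos by simp
      ultimately have "weighted_mass T = weighted_mass (real n * (A / 2))"
        using False by (intro weighted_mass_eq_short_range) simp_all
      also have "\<dots> = weighted_mass 0"
        using Suc.IH[of "real n * (A / 2)"] A_pos by simp
      finally show ?thesis .
    qed (use Suc in blast)
  qed simp
  moreover obtain n :: nat where "T / (A / 2) \<le> real n"
    using real_arch_simple by blast
  then have "T \<le> real n * (A / 2)" using A_pos by (simp add: field_simps)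
  ultimately show ?thesis using assms by blast
qed

lemma renewal_kernel_bound:
  obtains K where "K > 0"
    "\<And>a. 0 \<le> a \<Longrightarrow> a < A \<Longrightarrow> AE s in lborel. s \<in> {a..A} \<longrightarrow> renewal_kernel s \<le> K * xs a"
proof -
  obtain C where C: "AE s in lborel. s \<in> {0..A} \<longrightarrow> \<bar>k s\<bar> \<le> C"
    using k_Linfon unfolding Linfon_def by auto
  define K where "K = max C 1 * exp (\<bar>z\<bar> * A) / xs 0"
  have "K > 0" unfolding K_def using xs0_pos by simp
  moreover have "AE s in lborel. s \<in> {a..A} \<longrightarrow> renewal_kernel s \<le> K * xs a"
    if a: "0 \<le> a" "a < A" for a
    using C AE_lborel_singleton[of A]
  proof eventually_elim
    case (elim s)
    show ?case
    proof
      assume "s \<in> {a..A}"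
      with elim a have s: "0 \<le> s" "s < A" "a \<le> s" by auto
      have "renewal_kernel s = k s * xs s / xs 0"
        unfolding renewal_kernel_def using ktilde_eq[OF s(1,2)] s by simp
      also have "\<dots> \<le> max C 1 * (xs a * exp (\<bar>z\<bar> * A)) / xs 0"
        using elim s k_nonneg xs_upper_bound[OF a(1) s(3) s(2)] xs_pos[OF s(1,2)] xs0_pos
        by (intro divide_right_mono mult_mono) auto
      also have "\<dots> = K * xs a" unfolding K_def by simp
      finally show "renewal_kernel s \<le> K * xs a" .
    qed
  qed
  ultimately show ?thesis by (rule that)
qed

lemma ktilde_set_integrable: "set_integrable lborel {0..A} (ktilde mu z k)"
  using renewal_kernel_integrable unfolding set_integrable_def renewal_kernel_def[abs_def] by simp

lemma tail_le_xs:
  obtains K where "K > 0" "\<And>a. 0 \<le> a \<Longrightarrow> a < A \<Longrightarrow> tail a \<le> K * xs a"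
proof -
  obtain K where K: "K > 0"
    "\<And>a. 0 \<le> a \<Longrightarrow> a < A \<Longrightarrow> AE s in lborel. s \<in> {a..A} \<longrightarrow> renewal_kernel s \<le> K * xs a"
    using renewal_kernel_bound by metis
  have "tail a \<le> (K * A) * xs a" if a: "0 \<le> a" "a < A" for a
  proof -
    have "tail a \<le> (LINT s|lborel. indicator {a..A} s * (K * xs a))"
      unfolding tail_def using K(2)[OF a]
      by (intro integral_mono_AE[OF tail_integrable integrable_indicator_Icc_const])
        (auto simp: indicator_def elim!: eventually_mono)
    also have "\<dots> = K * xs a * (A - a)"
      using a by (simp add: integral_indicator_Icc_const)
    also have "\<dots> \<le> K * xs a * A"
      using a K(1) xs_pos[OF a] by simp
    finally show ?thesis by (simp add: ac_simps)
  qed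
  moreover have "K * A > 0" using K(1) A_pos by simp
  ultimately show ?thesis using that by blast
qed

lemma tail_ge:
  obtains K where "K > 0" "\<And>a. 0 \<le> a \<Longrightarrow> a < A \<Longrightarrow> 1 - K * a \<le> tail a"
proof -
  obtain K where K: "K > 0"
    "\<And>a. 0 \<le> a \<Longrightarrow> a < A \<Longrightarrow> AE s in lborel. s \<in> {a..A} \<longrightarrow> renewal_kernel s \<le> K * xs a"
    using renewal_kernel_bound by metis
  have "1 - (K * xs 0) * a \<le> tail a" if a: "0 \<le> a" "a < A" for a
  proof -
    have "1 = (LINT s:{0..a}|lborel. ktilde mu z k s) + tail a"
      using ktilde_integral set_integral_Icc_split[OF ktilde_set_integrable, of a] a tail_eq[of a] by simp
    moreover have "(LINT s:{0..a}|lborel. ktilde mu z k s) = (LINT s|lborel. indicator {0..a} s * renewal_kernel s)"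
      unfolding set_lebesgue_integral_def renewal_kernel_def using a
      by (intro arg_cong[where f="integral\<^sup>L lborel"]) (auto simp: indicator_def fun_eq_iff)
    moreover have "(LINT s|lborel. indicator {0..a} s * renewal_kernel s)
        \<le> (LINT s|lborel. indicator {0..a} s * (K * xs 0))"
    proof (rule integral_mono_AE)
      show "integrable lborel (\<lambda>s. indicator {0..a} s * renewal_kernel s)"
        using integrable_mult_indicator[OF _ renewal_kernel_integrable, of "{0..a}"] by simp
      show "AE s in lborel. indicator {0..a} s * renewal_kernel s \<le> indicator {0..a} s * (K * xs 0)"
        using K(2)[of 0] A_pos a by (auto simp: indicator_def elim!: eventually_mono)
    qed (rule integrable_indicator_Icc_const)
    moreover have "(LINT s|lborel. indicator {0..a} s * (K * xs 0)) = K * xs 0 * a"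
      using a by (simp add: integral_indicator_Icc_const)
    ultimately show ?thesis by linarith
  qed
  moreover have "K * xs 0 > 0" using K(1) xs0_pos by simp
  ultimately show ?thesis using that by blast
qed

lemma tail_ge_half:
  obtains d where "0 < d" "d < A" "\<And>a. 0 \<le> a \<Longrightarrow> a \<le> d \<Longrightarrow> 1 / 2 \<le> tail a"
proof -
  obtain K where K: "K > 0" "\<And>a. 0 \<le> a \<Longrightarrow> a < A \<Longrightarrow> 1 - K * a \<le> tail a"
    using tail_ge by metis
  define d where "d = min (A / 2) (1 / (2 * K))"
  have d: "0 < d" "d < A" unfolding d_def using A_pos K(1) by auto
  have "1 / 2 \<le> tail a" if a: "0 \<le> a" "a \<le> d" for a
  proof -
    have "K * a \<le> K * (1 / (2 * K))"
      using a K(1) unfolding d_def by (intro mult_left_mono) auto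
    then have "K * a \<le> 1 / 2" using K(1) by simp
    then show ?thesis using K(2)[of a] a d by linarith
  qed
  with d show ?thesis using that by blast
qed

lemma weighted_mass_0_finite: "weighted_mass 0 < \<infinity>"
proof -
  obtain K where K: "K > 0" "\<And>a. 0 \<le> a \<Longrightarrow> a < A \<Longrightarrow> tail a \<le> K * xs a"
    using tail_le_xs by metis
  define h where "h a = indicator {0..A} a * x a 0" for a
  have h_integrable: "integrable lborel h"
    unfolding h_def using L2on_integrable[OF x_L2on[of 0]] by simp
  have "ennreal (indicator {0..A} a * tail a * cohort (0 - a)) \<le> ennreal (norm (K * h a))" for a
  proof (cases "0 \<le> a \<and> a < A")
    case True
    then have a: "0 \<le> a" "a < A" by auto
    have "cohort (0 - a) = x a 0 / xs a"
      using normalized_eq_cohort[OF a, of 0] by (simp add: normalized_def growth_0)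
    moreover have "x a 0 > 0" using x_pos a by simp
    moreover have "tail a * cohort (0 - a) \<le> K * xs a * cohort (0 - a)"
      using K(2)[OF a] cohort_nonneg by (rule mult_right_mono)
    ultimately have "tail a * cohort (0 - a) \<le> norm (K * h a)"
      using a xs_pos[OF a] K(1) unfolding h_def by (simp add: abs_mult)
    then show ?thesis using a by (intro ennreal_leI) simp
  next
    case False
    then have "indicator {0..A} a * tail a * cohort (0 - a) = 0"
      using A_pos by (auto simp: indicator_def cohort_def)
    then show ?thesis by (metis ennreal_0 zero_le)
  qed
  then have "weighted_mass 0 \<le> (\<integral>\<^sup>+ a. ennreal (norm (K * h a)) \<partial>lborel)"
    unfolding weighted_mass_def by (intro nn_integral_mono)
  also have "\<dots> < \<infinity>"
    using integrable_mult_right[OF h_integrable, of K] unfolding integrable_iff_bounded by simp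
  finally show ?thesis .
qed

lemma weighted_mass_integral:
  "(LINT a:{0..A}|lborel. tail a * cohort (T - a)) = enn2real (weighted_mass T)"
  unfolding weighted_mass_def set_lebesgue_integral_def
  using tail_nonneg cohort_nonneg by (subst integral_eq_nn_integral) (auto simp: mult.assoc)

lemma weighted_mass_0_pos: "0 < enn2real (weighted_mass 0)"
proof -
  obtain d where d: "0 < d" "d < A" "\<And>a. 0 \<le> a \<Longrightarrow> a \<le> d \<Longrightarrow> 1 / 2 \<le> tail a"
    using tail_ge_half by metis
  have "integrable lborel (\<lambda>a. indicator {0..A} a * (tail a * cohort (0 - a)))"
    using weighted_mass_0_finite tail_nonneg cohort_nonneg
    by (intro integrableI_nonneg) (auto simp: weighted_mass_def mult.assoc)
  moreover have "0 < indicator {0..A} a * (tail a * cohort (0 - a))" if "0 < a" "a < d" for a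
    using that d(2) d(3)[of a] cohort_pos[of "0 - a"] by (simp add: indicator_def)
  ultimately have "0 < (LINT a:{0..A}|lborel. tail a * cohort (0 - a))"
    unfolding set_lebesgue_integral_def using tail_nonneg cohort_nonneg d(1)
    by (intro integral_pos_of_pos_on_interval) auto
  then show ?thesis by (metis weighted_mass_integral)
qed

lemma tail_integral_pos: "0 < (LINT a:{0..A}|lborel. tail a)"
proof -
  obtain d where d: "0 < d" "d < A" "\<And>a. 0 \<le> a \<Longrightarrow> a \<le> d \<Longrightarrow> 1 / 2 \<le> tail a"
    using tail_ge_half by metis
  have "integrable lborel (\<lambda>a. indicator {0..A} a * tail a)"
    using tail_nonneg tail_le_1
    by (intro Bochner_Integration.integrable_bound[OF integrable_indicator_Icc_const[of 0 A 1]])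
      (auto simp: indicator_def)
  moreover have "0 < indicator {0..A} a * tail a" if "0 < a" "a < d" for a
    using that d(2) d(3)[of a] by (simp add: indicator_def)
  ultimately show ?thesis
    unfolding set_lebesgue_integral_def using tail_nonneg d(1)
    by (intro integral_pos_of_pos_on_interval) auto
qed

lemma pi0_mult_xs:
  assumes a: "0 \<le> a" "a < A"
  shows "pi0 A mu z k a * xs a = xs 0 * tail a"
proof -
  have "indicator {a..A} s * (k s * exp (- (LINT l:{a..s}|lborel. z + mu l))) * xs a
      = xs 0 * (indicator {a..A} s * ktilde mu z k s)" if "s \<notin> {A}" for s
  proof (cases "s \<in> {a..A}")
    case True
    then have s: "a \<le> s" "s < A" using that by auto
    have "(LINT l:{a..s}|lborel. z + mu l) = (LINT l:{a..s}|lborel. mu l) + z * (s - a)"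
      using set_integral_Icc_add_const[OF mu_set_integrable[OF a(1) s(2)] s(1), of z]
      by (simp add: add.commute)
    moreover have "ktilde mu z k s = k s * xs s / xs 0"
      using ktilde_eq[of s] s a by simp
    moreover have "xs s = xs a * exp (- ((LINT l:{a..s}|lborel. mu l) + z * (s - a)))"
    proof -
      have "exp (- (cum_mu s + z * s))
          = exp (- (cum_mu a + z * a)) * exp (- ((LINT l:{a..s}|lborel. mu l) + z * (s - a)))"
        unfolding cum_mu_split[OF a(1) s] by (simp add: mult_exp_exp algebra_simps)
      then show ?thesis using xs_eq[OF a] xs_eq[of s] s a by simp
    qed
    ultimately show ?thesis using True xs0_pos by (simp add: field_simps)
  qed simp
  then have "pi0 A mu z k a * xs a = (LINT s|lborel. xs 0 * (indicator {a..A} s * ktilde mu z k s))"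
    unfolding pi0_def set_lebesgue_integral_def
    by (simp only: real_scaleR_def integral_mult_left_zero[symmetric])
      (rule integral_eq_except_finite[of "{A}"], auto)
  also have "\<dots> = xs 0 * tail a"
    using tail_eq[OF a(1)] unfolding set_lebesgue_integral_def by simp
  finally show ?thesis .
qed

lemma pi0_pairing:
  assumes T: "0 \<le> T"
  shows "(LINT a:{0..A}|lborel. pi0 A mu z k a * x a T) = xs 0 * growth T * enn2real (weighted_mass 0)"
proof -
  have "indicator {0..A} a * (pi0 A mu z k a * x a T)
      = (xs 0 * growth T) * (indicator {0..A} a * (tail a * cohort (T - a)))" if "a \<notin> {A}" for a
  proof (cases "a \<in> {0..A}")
    case True
    then have a: "0 \<le> a" "a < A" using that by auto
    have "x a T = xs a * growth T * cohort (T - a)"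
      using normalized_eq_cohort[OF a T] xs_pos[OF a] growth_pos[of T]
      by (simp add: normalized_def field_simps)
    then show ?thesis using True pi0_mult_xs[OF a] by simp
  qed simp
  then have "(LINT a:{0..A}|lborel. pi0 A mu z k a * x a T)
      = (xs 0 * growth T) * (LINT a:{0..A}|lborel. tail a * cohort (T - a))"
    unfolding set_lebesgue_integral_def
    by (simp only: real_scaleR_def integral_mult_right_zero[symmetric])
      (rule integral_eq_except_finite[of "{A}"], auto)
  then show ?thesis
    using weighted_mass_integral[of T] weighted_mass_const[OF T] by simp
qed

lemma pi0_pairing_xs:
  "(LINT a:{0..A}|lborel. pi0 A mu z k a * xs a) = xs 0 * (LINT a:{0..A}|lborel. tail a)"
  unfolding set_lebesgue_integral_def
  by (simp only: real_scaleR_def integral_mult_right_zero[symmetric])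
    (rule integral_eq_except_finite[of "{A}"], auto simp: pi0_mult_xs indicator_def)

definition "Pi_init = PiF A mu z k xs (\<lambda>b. x b 0)"

lemma PiF_solution: "0 \<le> T \<Longrightarrow> PiF A mu z k xs (\<lambda>b. x b T) = growth T * Pi_init"
  unfolding Pi_init_def PiF_def using pi0_pairing[of T] pi0_pairing[of 0] growth_0 by simp

lemma Pi_init_pos: "Pi_init > 0"
  unfolding Pi_init_def PiF_def
  using pi0_pairing[of 0] pi0_pairing_xs weighted_mass_0_pos tail_integral_pos xs0_pos growth_0
  by simp

lemma Pi_init_eq_initial: "Pi_init = PiF A mu z k xs x0"
proof -
  have "(LINT a:{0..A}|lborel. pi0 A mu z k a * x a 0) = (LINT a:{0..A}|lborel. pi0 A mu z k a * x0 a)"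
    unfolding set_lebesgue_integral_def
    by (rule integral_eq_except_finite[of "{0, A}"]) (auto simp: x_initial indicator_def)
  then show ?thesis unfolding Pi_init_def PiF_def by simp
qed

lemma exp_eta: "0 \<le> t \<Longrightarrow> exp (eta A mu z k xs x t) = growth t * Pi_init"
  unfolding eta_def using PiF_solution[of t] growth_pos[of t] Pi_init_pos by simp

lemma eta_eq: "0 \<le> t \<Longrightarrow> eta A mu z k xs x t = z * t - cum_W t + ln Pi_init"
  unfolding eta_def using PiF_solution[of t] growth_pos[of t] Pi_init_pos
  by (simp add: ln_mult growth_def)

lemma eta_has_derivative:
  assumes t: "0 \<le> t"
  shows "(eta A mu z k xs x has_real_derivative z - W t) (at t within {0..})"
proof -
  have "((\<lambda>s. z * s - cum_W s + ln Pi_init) has_real_derivative z * 1 - W t + 0) (at t within {0..})"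
    by (intro derivative_intros DERIV_cmult[OF DERIV_ident] cum_W_has_derivative[OF t])
  then have "((\<lambda>s. z * s - cum_W s + ln Pi_init) has_real_derivative z - W t) (at t within {0..})"
    by simp
  then show ?thesis
    by (rule has_field_derivative_transform_within[where d=1]) (use t eta_eq in auto)
qed

definition "psi r = cohort r / Pi_init - 1"

lemma psi_eq:
  assumes "0 \<le> a" "a < A" "0 \<le> t"
  shows "psi (t - a) = x a t / (xs a * PiF A mu z k xs (\<lambda>b. x b t)) - 1"
  using normalized_eq_cohort[OF assms, symmetric] PiF_solution[OF assms(3)]
  by (simp add: psi_def normalized_def mult.assoc)

lemma psi_renewal:
  assumes t: "0 \<le> t"
  shows "psi t = (LINT a:{0..A}|lborel. ktilde mu z k a * psi (t - a))"
proof -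
  have "(LINT a:{0..A}|lborel. ktilde mu z k a * psi (t - a))
      = (LINT a|lborel. renewal_kernel a * cohort (t - a) / Pi_init - renewal_kernel a)"
    unfolding set_lebesgue_integral_def psi_def renewal_kernel_def
    by (intro arg_cong[where f="integral\<^sup>L lborel"]) (auto simp: fun_eq_iff indicator_def field_simps)
  also have "\<dots> = (LINT a|lborel. renewal_kernel a * cohort (t - a)) / Pi_init - 1"
    using cohort_renewal(1)[OF t] renewal_kernel_integrable renewal_kernel_integral by simp
  finally show ?thesis
    unfolding psi_def using cohort_renewal(2)[OF t] by simp
qed

lemma eta_0: "eta A mu z k xs x 0 = ln (PiF A mu z k xs x0)"
  unfolding eta_def using Pi_init_eq_initial Pi_init_def by simp

lemma psi_initial: "0 < a \<Longrightarrow> a < A \<Longrightarrow> psi (- a) = x0 a / (xs a * PiF A mu z k xs x0) - 1"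
  using psi_eq[of a 0] x_initial[of a] Pi_init_eq_initial PiF_solution[of 0] growth_0 by simp

lemma x_eq_psi:
  assumes "0 \<le> a" "a < A" "0 \<le> t"
  shows "x a t = xs a * (1 + psi (t - a)) * exp (eta A mu z k xs x t)"
  using normalized_eq_cohort[OF assms, symmetric] exp_eta[OF assms(3)] xs_pos[OF assms(1,2)]
    growth_pos[of t] Pi_init_pos
  by (simp add: psi_def normalized_def)

lemma pairing_eq_psi:
  assumes "0 \<le> t"
  shows "(LINT a:{0..A}|lborel. g a * x a t)
    = exp (eta A mu z k xs x t) * (LINT a:{0..A}|lborel. g a * xs a * (1 + psi (t - a)))"
  unfolding set_lebesgue_integral_def
  by (simp only: real_scaleR_def integral_mult_right_zero[symmetric])
    (rule integral_eq_except_finite[of "{A}"], auto simp: x_eq_psi assms indicator_def)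

end

theorem lemma3p1:
  fixes A ustar z1 z2 z3 :: real
    and u g1 g2 g3 mu1 mu2 mu3 k1 k2 k3 xs1 xs2 xs3 x10 x20 x30 :: "real \<Rightarrow> real"
    and x1 x2 x3 :: "real \<Rightarrow> real \<Rightarrow> real"
  assumes A: "A > 0"
    and g: "L2on A g1" "L2on A g2" "L2on A g3"
    and g_nonneg: "\<forall>a\<in>{0..A}. g1 a \<ge> 0 \<and> g2 a \<ge> 0 \<and> g3 a \<ge> 0"
    and mu_nonneg: "\<forall>a\<in>{0..A}. mu1 a \<ge> 0 \<and> mu2 a \<ge> 0 \<and> mu3 a \<ge> 0"
    and mu_loc: "locint A mu1" "locint A mu2" "locint A mu3"
    and mu_inf: "(\<integral>\<^sup>+ a. ennreal (mu1 a) * indicator {0..A} a \<partial>lborel) = \<infinity>"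
                "(\<integral>\<^sup>+ a. ennreal (mu2 a) * indicator {0..A} a \<partial>lborel) = \<infinity>"
                "(\<integral>\<^sup>+ a. ennreal (mu3 a) * indicator {0..A} a \<partial>lborel) = \<infinity>"
    and k: "Linfon A k1" "Linfon A k2" "Linfon A k3"
    and k_nonneg: "\<forall>a\<in>{0..A}. k1 a \<ge> 0 \<and> k2 a \<ge> 0 \<and> k3 a \<ge> 0"
    and steady: "steady_profile A mu1 z1 xs1" "steady_profile A mu2 z2 xs2"
                "steady_profile A mu3 z3 xs3"
    and ktilde_one: "(LINT a:{0..A}|lborel. ktilde mu1 z1 k1 a) = 1"
                    "(LINT a:{0..A}|lborel. ktilde mu2 z2 k2 a) = 1"
                    "(LINT a:{0..A}|lborel. ktilde mu3 z3 k3 a) = 1"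
    and zeta: "z1 = (LINT a:{0..A}|lborel. g1 a * xs2 a) + ustar"
              "z2 = (LINT a:{0..A}|lborel. g2 a * xs3 a)"
              "z3 = (LINT a:{0..A}|lborel. g3 a * xs1 a)"
    and u: "continuous_on {0..} u"
    and init: "L2on A x10" "L2on A x20" "L2on A x30"
    and sol1: "char_solution A mu1 k1 (\<lambda>t. (LINT a:{0..A}|lborel. g1 a * x2 a t) + u t) x1 x10"
    and sol2: "char_solution A mu2 k2 (\<lambda>t. (LINT a:{0..A}|lborel. g2 a * x3 a t)) x2 x20"
    and sol3: "char_solution A mu3 k3 (\<lambda>t. (LINT a:{0..A}|lborel. g3 a * x1 a t)) x3 x30"
    and pos: "\<forall>a t. 0 \<le> a \<and> a < A \<and> 0 \<le> t \<longrightarrow> x1 a t > 0 \<and> x2 a t > 0 \<and> x3 a t > 0"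
  shows "\<exists>psi1 psi2 psi3 :: real \<Rightarrow> real.
    \<comment> \<open>definition of psi_i(t-a) (well-defined)\<close>
    (\<forall>a t. 0 \<le> a \<and> a < A \<and> 0 \<le> t \<longrightarrow>
        psi1 (t - a) = x1 a t / (xs1 a * PiF A mu1 z1 k1 xs1 (\<lambda>b. x1 b t)) - 1 \<and>
        psi2 (t - a) = x2 a t / (xs2 a * PiF A mu2 z2 k2 xs2 (\<lambda>b. x2 b t)) - 1 \<and>
        psi3 (t - a) = x3 a t / (xs3 a * PiF A mu3 z3 k3 xs3 (\<lambda>b. x3 b t)) - 1) \<and>
    \<comment> \<open>ODEs for eta_i\<close>
    (\<forall>t\<ge>0.
        (eta A mu1 z1 k1 xs1 x1 has_real_derivative
           (z1 - u t - exp (eta A mu2 z2 k2 xs2 x2 t)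
                 * (LINT a:{0..A}|lborel. g1 a * xs2 a * (1 + psi2 (t - a))))) (at t within {0..}) \<and>
        (eta A mu2 z2 k2 xs2 x2 has_real_derivative
           (z2 - exp (eta A mu3 z3 k3 xs3 x3 t)
                 * (LINT a:{0..A}|lborel. g2 a * xs3 a * (1 + psi3 (t - a))))) (at t within {0..}) \<and>
        (eta A mu3 z3 k3 xs3 x3 has_real_derivative
           (z3 - exp (eta A mu1 z1 k1 xs1 x1 t)
                 * (LINT a:{0..A}|lborel. g3 a * xs1 a * (1 + psi1 (t - a))))) (at t within {0..})) \<and>
    \<comment> \<open>renewal equations for psi_i\<close>
    (\<forall>t\<ge>0.
        psi1 t = (LINT a:{0..A}|lborel. ktilde mu1 z1 k1 a * psi1 (t - a)) \<and>
        psi2 t = (LINT a:{0..A}|lborel. ktilde mu2 z2 k2 a * psi2 (t - a)) \<and>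
        psi3 t = (LINT a:{0..A}|lborel. ktilde mu3 z3 k3 a * psi3 (t - a))) \<and>
    \<comment> \<open>initial conditions\<close>
    eta A mu1 z1 k1 xs1 x1 0 = ln (PiF A mu1 z1 k1 xs1 x10) \<and>
    eta A mu2 z2 k2 xs2 x2 0 = ln (PiF A mu2 z2 k2 xs2 x20) \<and>
    eta A mu3 z3 k3 xs3 x3 0 = ln (PiF A mu3 z3 k3 xs3 x30) \<and>
    (\<forall>a. 0 < a \<and> a < A \<longrightarrow>
        psi1 (- a) = x10 a / (xs1 a * PiF A mu1 z1 k1 xs1 x10) - 1 \<and>
        psi2 (- a) = x20 a / (xs2 a * PiF A mu2 z2 k2 xs2 x20) - 1 \<and>
        psi3 (- a) = x30 a / (xs3 a * PiF A mu3 z3 k3 xs3 x30) - 1) \<and>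
    \<comment> \<open>representation of the solution\<close>
    (\<forall>a t. 0 \<le> a \<and> a < A \<and> 0 \<le> t \<longrightarrow>
        x1 a t = xs1 a * (1 + psi1 (t - a)) * exp (eta A mu1 z1 k1 xs1 x1 t) \<and>
        x2 a t = xs2 a * (1 + psi2 (t - a)) * exp (eta A mu2 z2 k2 xs2 x2 t) \<and>
        x3 a t = xs3 a * (1 + psi3 (t - a)) * exp (eta A mu3 z3 k3 xs3 x3 t))"
proof -
  have W_continuous: "continuous_on {0..} (\<lambda>t. LINT a:{0..A}|lborel. g1 a * x2 a t)"
    "continuous_on {0..} (\<lambda>t. LINT a:{0..A}|lborel. g2 a * x3 a t)"
    "continuous_on {0..} (\<lambda>t. LINT a:{0..A}|lborel. g3 a * x1 a t)"
    using g sol1 sol2 sol3 unfolding char_solution_def by (auto intro: L2on_pairing_continuous)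
  interpret s1: age_structured_species A z1 mu1 k1 xs1
      "\<lambda>t. (LINT a:{0..A}|lborel. g1 a * x2 a t) + u t" x10 x1
    using A mu_nonneg mu_loc k k_nonneg steady ktilde_one sol1 pos W_continuous u
    by unfold_locales (auto intro: continuous_intros)
  interpret s2: age_structured_species A z2 mu2 k2 xs2 "\<lambda>t. LINT a:{0..A}|lborel. g2 a * x3 a t" x20 x2
    using A mu_nonneg mu_loc k k_nonneg steady ktilde_one sol2 pos W_continuous by unfold_locales auto
  interpret s3: age_structured_species A z3 mu3 k3 xs3 "\<lambda>t. LINT a:{0..A}|lborel. g3 a * x1 a t" x30 x3
    using A mu_nonneg mu_loc k k_nonneg steady ktilde_one sol3 pos W_continuous by unfold_locales auto
  have "(eta A mu1 z1 k1 xs1 x1 has_real_derivative z1 - u t - exp (eta A mu2 z2 k2 xs2 x2 t)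
      * (LINT a:{0..A}|lborel. g1 a * xs2 a * (1 + s2.psi (t - a)))) (at t within {0..})"
    "(eta A mu2 z2 k2 xs2 x2 has_real_derivative z2 - exp (eta A mu3 z3 k3 xs3 x3 t)
      * (LINT a:{0..A}|lborel. g2 a * xs3 a * (1 + s3.psi (t - a)))) (at t within {0..})"
    "(eta A mu3 z3 k3 xs3 x3 has_real_derivative z3 - exp (eta A mu1 z1 k1 xs1 x1 t)
      * (LINT a:{0..A}|lborel. g3 a * xs1 a * (1 + s1.psi (t - a)))) (at t within {0..})"
    if "0 \<le> t" for t
    using s1.eta_has_derivative[OF that] s2.eta_has_derivative[OF that] s3.eta_has_derivative[OF that]
    unfolding s1.pairing_eq_psi[OF that] s2.pairing_eq_psi[OF that] s3.pairing_eq_psi[OF that]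
    by (simp_all add: algebra_simps)
  then show ?thesis
    using s1.psi_eq s2.psi_eq s3.psi_eq s1.psi_renewal s2.psi_renewal s3.psi_renewal
      s1.eta_0 s2.eta_0 s3.eta_0 s1.psi_initial s2.psi_initial s3.psi_initial
      s1.x_eq_psi s2.x_eq_psi s3.x_eq_psi
    by (intro exI[of _ s1.psi] exI[of _ s2.psi] exI[of _ s3.psi]) simp
qed

end
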